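(* Let $\{\mathcal{C}_n\}$ be a sequence of binary linear codes with rates $r_n\to r$ for some $r\in(0,1)$, and let $h^{(n)}$ be the average EXIT function of $\mathcal{C}_n$. The following are equivalent: (S1) $\{\mathcal{C}_n\}$ is capacity achieving on the BEC under bit-MAP decoding; (S2) $\lim_{n\to\infty}h^{(n)}(p)=0$ for $0\le p<1-r$ and $\lim_{n\to\infty}h^{(n)}(p)=1$ for $1-r<p\le1$; (S3) for every $0<\epsilon\le 1/2$, $\lim_{n\to\infty}\big(p^{(n)}_{1-\epsilon}-p^{(n)}_{\epsilon}\big)=0$, where $p^{(n)}_t=\inf\{p\in[0,1]:h^{(n)}(p)\ge t\}$.
   Context: Binary linear codes are assumed proper (no coordinate zero in all codewords) and of minimum distance at least $2$; the rate of a length-$N$, dimension-$K$ code is $K/N$. A codeword $\underline{X}$ is uniform on the code and sent over $\mathrm{BEC}(p)$ (each bit independently erased with probability $p$), giving $\underline{Y}$. The bit-MAP erasure probability of bit $i$, $P_{b,i}(p)$, is the probability that $X_i$ is not uniquely determined by $\underline{Y}$, and $P_b(p)=\frac1N\sum_i P_{b,i}(p)$. The average EXIT function is $h(p)=\frac1N\sum_i H(X_i\mid\underline{Y}_{\sim i})$ (entropy in bits, $\underline{Y}_{\sim i}$ omits coordinate $i$); it is continuous and strictly increasing on $[0,1]$ with $h(0)=0$, $h(1)=1$. A sequence of codes with rates $r_n\to r\in(0,1)$ is capacity achieving on the BEC under bit-MAP decoding if $\lim_n P_b^{(n)}(p)=0$ for every $p\in[0,1-r)$. *)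

theory Defs
  imports Complex_Main
begin

text \<open>A binary word of length N is a function nat => bool vanishing outside {..<N}.
  A binary linear code of length N is a set of such words containing 0 and closed
  under coordinatewise addition (xor).\<close>

definition zero_word :: "nat \<Rightarrow> bool" where
  "zero_word = (\<lambda>_. False)"

definition word_add :: "(nat \<Rightarrow> bool) \<Rightarrow> (nat \<Rightarrow> bool) \<Rightarrow> (nat \<Rightarrow> bool)" where
  "word_add c d = (\<lambda>j. c j \<noteq> d j)"

definition weight :: "(nat \<Rightarrow> bool) \<Rightarrow> nat" where
  "weight c = card {j. c j}"

definition binary_linear_code :: "nat \<Rightarrow> (nat \<Rightarrow> bool) set \<Rightarrow> bool" where
  "binary_linear_code N C \<longleftrightarrow>
     (\<forall>c\<in>C. \<forall>j. N \<le> j \<longrightarrow> \<not> c j) \<and>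
     zero_word \<in> C \<and> (\<forall>c\<in>C. \<forall>d\<in>C. word_add c d \<in> C)"

definition proper_code :: "nat \<Rightarrow> (nat \<Rightarrow> bool) set \<Rightarrow> bool" where
  "proper_code N C \<longleftrightarrow> (\<forall>i<N. \<exists>c\<in>C. c i)"

definition min_dist_ge2 :: "(nat \<Rightarrow> bool) set \<Rightarrow> bool" where
  "min_dist_ge2 C \<longleftrightarrow> (\<forall>c\<in>C. \<forall>d\<in>C. c \<noteq> d \<longrightarrow> weight (word_add c d) \<ge> 2)"

definition code_rate :: "nat \<Rightarrow> (nat \<Rightarrow> bool) set \<Rightarrow> real" where
  "code_rate N C = log 2 (real (card C)) / real N"

definition erasure_weight :: "real \<Rightarrow> nat \<Rightarrow> nat set \<Rightarrow> real" where
  "erasure_weight p m E = p ^ card E * (1 - p) ^ (m - card E)"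

definition consistent :: "(nat \<Rightarrow> bool) set \<Rightarrow> nat set \<Rightarrow> (nat \<Rightarrow> bool) \<Rightarrow> (nat \<Rightarrow> bool) set" where
  "consistent C S x = {c\<in>C. \<forall>j\<in>S. c j = x j}"

text \<open>Bit-MAP erasure probability of bit i: X uniform on C, E the erased set;
  X_i not uniquely determined by Y iff two codewords consistent with Y differ at i.\<close>
definition bitMAP_erasure :: "nat \<Rightarrow> (nat \<Rightarrow> bool) set \<Rightarrow> nat \<Rightarrow> real \<Rightarrow> real" where
  "bitMAP_erasure N C i p =
     (\<Sum>x\<in>C. \<Sum>E\<in>Pow {..<N}. (1 / real (card C)) * erasure_weight p N E *
        (if \<exists>c\<in>consistent C ({..<N} - E) x. \<exists>d\<in>consistent C ({..<N} - E) x. c i \<noteq> d i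
         then 1 else 0))"

definition avg_bitMAP_erasure :: "nat \<Rightarrow> (nat \<Rightarrow> bool) set \<Rightarrow> real \<Rightarrow> real" where
  "avg_bitMAP_erasure N C p = (\<Sum>i<N. bitMAP_erasure N C i p) / real N"

definition ent_term :: "real \<Rightarrow> real" where
  "ent_term q = (if q \<le> 0 then 0 else - q * log 2 q)"

definition binary_entropy :: "real \<Rightarrow> real" where
  "binary_entropy q = ent_term q + ent_term (1 - q)"

text \<open>H(X_i | Y_{~i}): Y_{~i} consists of the erasure set E \<subseteq> {..<N}-{i} and the values
  of X on {..<N}-{i}-E.  Given Y_{~i}, the posterior of X_i (X uniform on C) puts mass
  (#consistent codewords with c i) / (#consistent codewords) on True.\<close>
definition cond_entropy_bit :: "nat \<Rightarrow> (nat \<Rightarrow> bool) set \<Rightarrow> nat \<Rightarrow> real \<Rightarrow> real" where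
  "cond_entropy_bit N C i p =
     (\<Sum>x\<in>C. \<Sum>E\<in>Pow ({..<N} - {i}). (1 / real (card C)) * erasure_weight p (N - 1) E *
        binary_entropy
          (real (card {c\<in>consistent C ({..<N} - {i} - E) x. c i})
            / real (card (consistent C ({..<N} - {i} - E) x))))"

definition avg_EXIT :: "nat \<Rightarrow> (nat \<Rightarrow> bool) set \<Rightarrow> real \<Rightarrow> real" where
  "avg_EXIT N C p = (\<Sum>i<N. cond_entropy_bit N C i p) / real N"

definition exit_quantile :: "nat \<Rightarrow> (nat \<Rightarrow> bool) set \<Rightarrow> real \<Rightarrow> real" where
  "exit_quantile N C t = Inf {p\<in>{0..1}. avg_EXIT N C p \<ge> t}"

end

theory Submission
  imports Defs
begin

text \<open>On the erasure channel every posterior bit entropy is 0 or 1, so the EXIT function of bit i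
  is the probability that the unerased other bits leave it undetermined, and the bit-MAP erasure
  probability is p times that. By the Russo--Margulis formula the average EXIT function h is the
  derivative of the normalized conditional entropy H(X | Y) / N, which grows from 0 at p = 0 to the
  rate at p = 1 (area theorem). The equivalences then only use that each h_n increases from 0 to 1
  with area R_n \<rightarrow> r: if h_n \<rightarrow> 0 below 1 - r, the area forces h_n \<rightarrow> 1 above 1 - r; two-sided
  convergence squeezes all quantiles to 1 - r; and conversely, if the quantiles of h_n merge, the
  area bound puts them at or beyond 1 - r, so h_n is eventually small below 1 - r.\<close>

section \<open>Averages over random erasure patterns\<close>

definition erasure_avg :: "nat set \<Rightarrow> (nat set \<Rightarrow> real) \<Rightarrow> real \<Rightarrow> real" where
  "erasure_avg M g p = (\<Sum>E\<in>Pow M. erasure_weight p (card M) E * g E)"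

lemma erasure_avg_empty [simp]: "erasure_avg {} g p = g {}"
  by (simp add: erasure_avg_def erasure_weight_def)

lemma erasure_avg_insert:
  assumes "finite M" "a \<notin> M"
  shows "erasure_avg (insert a M) g p
           = p * erasure_avg M (\<lambda>E. g (insert a E)) p + (1 - p) * erasure_avg M g p"
proof -
  let ?w = "\<lambda>E. p ^ card E * (1 - p) ^ (Suc (card M) - card E) * g E"
  have inj: "inj_on (insert a) (Pow M)"
    using assms(2) by (auto simp: inj_on_def)
  have "erasure_avg (insert a M) g p = sum ?w (Pow M) + sum ?w (insert a ` Pow M)"
    unfolding erasure_avg_def erasure_weight_def Pow_insert using assms
    by (subst sum.union_disjoint) auto
  also have "sum ?w (insert a ` Pow M) = p * erasure_avg M (\<lambda>E. g (insert a E)) p"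
    unfolding sum.reindex[OF inj] erasure_avg_def erasure_weight_def sum_distrib_left
    using assms by (intro sum.cong refl) (auto simp: card_insert_if finite_subset)
  also have "sum ?w (Pow M) = (1 - p) * erasure_avg M g p"
    unfolding erasure_avg_def erasure_weight_def sum_distrib_left
    using assms by (intro sum.cong refl) (auto simp: card_mono Suc_diff_le)
  finally show ?thesis by simp
qed

lemma erasure_avg_cong: "(\<And>E. E \<subseteq> M \<Longrightarrow> g E = g' E) \<Longrightarrow> erasure_avg M g p = erasure_avg M g' p"
  unfolding erasure_avg_def by (rule sum.cong) auto

lemma erasure_avg_diff: "erasure_avg M (\<lambda>E. f E - g E) p = erasure_avg M f p - erasure_avg M g p"
  unfolding erasure_avg_def by (simp add: sum_subtractf algebra_simps)

lemma erasure_avg_at_0: "finite M \<Longrightarrow> erasure_avg M g 0 = g {}"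
  by (induction M arbitrary: g rule: finite_induct) (simp_all add: erasure_avg_insert)

lemma erasure_avg_at_1: "finite M \<Longrightarrow> erasure_avg M g 1 = g M"
  by (induction M arbitrary: g rule: finite_induct) (simp_all add: erasure_avg_insert)

lemma erasure_avg_nonneg:
  "0 \<le> p \<Longrightarrow> p \<le> 1 \<Longrightarrow> (\<And>E. E \<subseteq> M \<Longrightarrow> 0 \<le> g E) \<Longrightarrow> 0 \<le> erasure_avg M g p"
  unfolding erasure_avg_def erasure_weight_def by (intro sum_nonneg mult_nonneg_nonneg) auto

lemma erasure_avg_has_real_derivative:
  assumes "finite M"
  shows "(erasure_avg M g has_real_derivative
           (\<Sum>j\<in>M. erasure_avg (M - {j}) (\<lambda>E. g (insert j E) - g E) p)) (at p)"
  using assms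
proof (induction M arbitrary: g rule: finite_induct)
  case empty
  then show ?case by simp
next
  case (insert a M)
  define D where "D g' = (\<Sum>j\<in>M. erasure_avg (M - {j}) (\<lambda>E. g' (insert j E) - g' E) p)" for g'
  have split: "erasure_avg (insert a M) g
      = (\<lambda>p. p * erasure_avg M (\<lambda>E. g (insert a E)) p + (1 - p) * erasure_avg M g p)"
    using insert by (simp add: erasure_avg_insert fun_eq_iff)
  have "(\<Sum>j\<in>insert a M. erasure_avg (insert a M - {j}) (\<lambda>E. g (insert j E) - g E) p)
      = erasure_avg M (\<lambda>E. g (insert a E) - g E) p
        + (\<Sum>j\<in>M. erasure_avg (insert a (M - {j})) (\<lambda>E. g (insert j E) - g E) p)"
    using insert by (simp add: insert_Diff_if) (rule sum.cong; auto)
  also have "(\<Sum>j\<in>M. erasure_avg (insert a (M - {j})) (\<lambda>E. g (insert j E) - g E) p)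
      = p * D (\<lambda>E. g (insert a E)) + (1 - p) * D g"
    unfolding D_def sum_distrib_left sum.distrib[symmetric]
    using insert by (intro sum.cong refl) (simp add: erasure_avg_insert insert_commute)
  finally have increments: "(\<Sum>j\<in>insert a M. erasure_avg (insert a M - {j}) (\<lambda>E. g (insert j E) - g E) p)
      = erasure_avg M (\<lambda>E. g (insert a E)) p + p * D (\<lambda>E. g (insert a E))
        - erasure_avg M g p + (1 - p) * D g"
    by (simp add: erasure_avg_diff)
  have "((\<lambda>p. p * erasure_avg M (\<lambda>E. g (insert a E)) p + (1 - p) * erasure_avg M g p)
          has_real_derivative
          erasure_avg M (\<lambda>E. g (insert a E)) p + p * D (\<lambda>E. g (insert a E))
            - erasure_avg M g p + (1 - p) * D g) (at p)"
    unfolding D_def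
    by (auto intro!: derivative_eq_intros insert.IH simp: insert_commute)
  then show ?case
    unfolding split increments .
qed

lemma erasure_avg_mono:
  assumes "finite M" and g: "\<And>E F. E \<subseteq> F \<Longrightarrow> F \<subseteq> M \<Longrightarrow> g E \<le> g F"
    and "0 \<le> x" "x \<le> y" "y \<le> 1"
  shows "erasure_avg M g x \<le> erasure_avg M g y"
proof (rule DERIV_nonneg_imp_nondecreasing[OF \<open>x \<le> y\<close>])
  fix t assume "x \<le> t" "t \<le> y"
  then show "\<exists>d. (erasure_avg M g has_real_derivative d) (at t) \<and> 0 \<le> d"
    using assms
    by (intro exI[of _ "\<Sum>j\<in>M. erasure_avg (M - {j}) (\<lambda>E. g (insert j E) - g E) t"]
        conjI erasure_avg_has_real_derivative sum_nonneg erasure_avg_nonneg) (auto intro: g)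
qed

section \<open>Linear codes on the erasure channel\<close>

definition vanishing_codewords :: "(nat \<Rightarrow> bool) set \<Rightarrow> nat set \<Rightarrow> (nat \<Rightarrow> bool) set" where
  "vanishing_codewords C S = {c\<in>C. \<forall>j\<in>S. \<not> c j}"

definition bit_undetermined :: "(nat \<Rightarrow> bool) set \<Rightarrow> nat \<Rightarrow> nat set \<Rightarrow> bool" where
  "bit_undetermined C i S \<longleftrightarrow> (\<exists>c\<in>vanishing_codewords C S. c i)"

text \<open>H(X | Y) / N: given the unerased positions S,
  X is uniform on a coset of vanishing_codewords C S.\<close>
definition normalized_cond_entropy :: "nat \<Rightarrow> (nat \<Rightarrow> bool) set \<Rightarrow> real \<Rightarrow> real" where
  "normalized_cond_entropy N C p =
     erasure_avg {..<N} (\<lambda>E. log 2 (real (card (vanishing_codewords C ({..<N} - E))))) p / real N"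

lemma word_add_apply [simp]: "word_add c d j = (c j \<noteq> d j)"
  by (simp add: word_add_def)

lemma word_add_cancel [simp]: "word_add (word_add c d) d = c"
  by (auto simp: word_add_def)

lemma vanishing_codewords_insert:
  "vanishing_codewords C (insert j S) = {c\<in>vanishing_codewords C S. \<not> c j}"
  unfolding vanishing_codewords_def by blast

lemma bit_undetermined_antimono:
  "bit_undetermined C i T \<Longrightarrow> S \<subseteq> T \<Longrightarrow> bit_undetermined C i S"
  unfolding bit_undetermined_def vanishing_codewords_def by blast

lemma card_filter_partition: "finite A \<Longrightarrow> card {x\<in>A. P x} + card {x\<in>A. \<not> P x} = card A"
proof -
  assume "finite A"
  moreover have "A = {x\<in>A. P x} \<union> {x\<in>A. \<not> P x}" by blast
  ultimately show ?thesis
    by (metis (no_types, lifting) card_Un_disjoint disjoint_iff finite_Un mem_Collect_eq)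
qed

lemma card_eq_twice_card_bit_clear:
  assumes "finite A" "d i" "\<And>c. c \<in> A \<Longrightarrow> word_add c d \<in> A"
  shows "card A = 2 * card {c\<in>A. \<not> c i}"
proof -
  have "bij_betw (\<lambda>c. word_add c d) {c\<in>A. \<not> c i} {c\<in>A. c i}"
    by (rule bij_betw_byWitness[where f' = "\<lambda>c. word_add c d"]) (use assms in auto)
  then have "card {c\<in>A. c i} = card {c\<in>A. \<not> c i}"
    by (simp add: bij_betw_same_card)
  then show ?thesis
    using card_filter_partition[OF assms(1), of "\<lambda>c. c i"] by simp
qed

lemma binary_linear_code_finite:
  assumes "binary_linear_code N C" shows "finite C"
proof (rule finite_subset)
  show "C \<subseteq> (\<lambda>A j. j \<in> A) ` Pow {..<N}"
  proof
    fix c assume "c \<in> C"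
    then have "{j. c j} \<in> Pow {..<N}"
      using assms by (auto simp: binary_linear_code_def not_less[symmetric])
    moreover have "c = (\<lambda>j. j \<in> {j. c j})" by simp
    ultimately show "c \<in> (\<lambda>A j. j \<in> A) ` Pow {..<N}" by blast
  qed
qed simp

context
  fixes N :: nat and C :: "(nat \<Rightarrow> bool) set"
  assumes code: "binary_linear_code N C"
begin

lemma finite_code: "finite C"
  by (rule binary_linear_code_finite[OF code])

lemma zero_word_in_code: "zero_word \<in> C"
  using code by (simp add: binary_linear_code_def)

lemma word_add_in_code: "c \<in> C \<Longrightarrow> d \<in> C \<Longrightarrow> word_add c d \<in> C"
  using code by (simp add: binary_linear_code_def)

lemma codeword_vanishes_beyond: "c \<in> C \<Longrightarrow> N \<le> j \<Longrightarrow> \<not> c j"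
  using code unfolding binary_linear_code_def by blast

lemma finite_vanishing_codewords: "finite (vanishing_codewords C S)"
  using finite_code by (simp add: vanishing_codewords_def)

lemma card_vanishing_codewords_pos: "card (vanishing_codewords C S) > 0"
  using finite_vanishing_codewords zero_word_in_code
  by (auto simp: card_gt_0_iff vanishing_codewords_def zero_word_def)

lemma word_add_vanishing_codewords:
  "c \<in> vanishing_codewords C S \<Longrightarrow> d \<in> vanishing_codewords C S
     \<Longrightarrow> word_add c d \<in> vanishing_codewords C S"
  by (auto simp: vanishing_codewords_def word_add_in_code)

lemma vanishing_codewords_all: "vanishing_codewords C {..<N} = {zero_word}"
  using codeword_vanishes_beyond zero_word_in_code
  by (auto simp: vanishing_codewords_def zero_word_def fun_eq_iff) (metis lessThan_iff not_less)

lemma consistent_word_add: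
  "c \<in> consistent C S x \<Longrightarrow> d \<in> vanishing_codewords C S \<Longrightarrow> word_add c d \<in> consistent C S x"
  by (auto simp: consistent_def vanishing_codewords_def word_add_in_code)

lemma consistent_word_add_eq_vanishing:
  "c \<in> consistent C S x \<Longrightarrow> d \<in> consistent C S x \<Longrightarrow> word_add c d \<in> vanishing_codewords C S"
  by (auto simp: consistent_def vanishing_codewords_def word_add_in_code)

lemma self_in_consistent: "x \<in> C \<Longrightarrow> x \<in> consistent C S x"
  by (simp add: consistent_def)

lemma consistent_differ_iff_bit_undetermined:
  assumes "x \<in> C"
  shows "(\<exists>c\<in>consistent C S x. \<exists>d\<in>consistent C S x. c i \<noteq> d i) \<longleftrightarrow> bit_undetermined C i S"
proof
  assume "\<exists>c\<in>consistent C S x. \<exists>d\<in>consistent C S x. c i \<noteq> d i"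
  then show "bit_undetermined C i S"
    unfolding bit_undetermined_def by (fastforce dest: consistent_word_add_eq_vanishing)
next
  assume "bit_undetermined C i S"
  then obtain d where "d \<in> vanishing_codewords C S" "d i"
    unfolding bit_undetermined_def by blast
  moreover have "x \<in> consistent C S x"
    by (rule self_in_consistent[OF assms])
  ultimately show "\<exists>c\<in>consistent C S x. \<exists>d\<in>consistent C S x. c i \<noteq> d i"
    using consistent_word_add[of x S x d] by (intro bexI[of _ x] bexI[of _ "word_add x d"]) auto
qed

lemma binary_entropy_posterior:
  assumes "x \<in> C"
  shows "binary_entropy (real (card {c\<in>consistent C S x. c i}) / real (card (consistent C S x)))
      = (if bit_undetermined C i S then 1 else 0)"
proof -
  let ?A = "consistent C S x"
  have fin: "finite ?A" using finite_code by (simp add: consistent_def)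
  have pos: "card ?A > 0"
    using fin self_in_consistent[OF assms] card_gt_0_iff by blast
  show ?thesis
  proof (cases "bit_undetermined C i S")
    case True
    then obtain d where d: "d \<in> vanishing_codewords C S" "d i"
      by (auto simp: bit_undetermined_def)
    have "card ?A = 2 * card {c\<in>?A. \<not> c i}"
      using fin d by (intro card_eq_twice_card_bit_clear[where d = d]) (auto intro: consistent_word_add)
    then have "real (card {c\<in>?A. c i}) / real (card ?A) = 1/2"
      using card_filter_partition[OF fin, of "\<lambda>c. c i"] pos by simp
    then show ?thesis
      using True by (simp add: binary_entropy_def ent_term_def log_divide)
  next
    case False
    have "c i = x i" if "c \<in> ?A" for c
      using False consistent_word_add_eq_vanishing[OF self_in_consistent[OF assms] that]
      unfolding bit_undetermined_def by (metis word_add_apply)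
    then have "{c\<in>?A. c i} = (if x i then ?A else {})" by auto
    then show ?thesis
      using False pos by (simp add: binary_entropy_def ent_term_def)
  qed
qed

lemma average_over_code:
  assumes "m = card M" "\<And>x E. x \<in> C \<Longrightarrow> E \<subseteq> M \<Longrightarrow> f x E = g E"
  shows "(\<Sum>x\<in>C. \<Sum>E\<in>Pow M. (1 / real (card C)) * erasure_weight p m E * f x E)
       = erasure_avg M g p"
proof -
  have "card C > 0"
    using finite_code zero_word_in_code card_gt_0_iff by blast
  moreover have "(\<Sum>x\<in>C. \<Sum>E\<in>Pow M. (1 / real (card C)) * erasure_weight p m E * f x E)
      = (\<Sum>x\<in>C. (1 / real (card C)) * erasure_avg M g p)"
    using assms by (intro sum.cong refl) (simp add: erasure_avg_def sum_distrib_left mult.assoc)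
  ultimately show ?thesis by simp
qed

lemma cond_entropy_bit_eq_erasure_avg:
  assumes "i < N"
  shows "cond_entropy_bit N C i p =
    erasure_avg ({..<N} - {i}) (\<lambda>E. if bit_undetermined C i ({..<N} - {i} - E) then 1 else 0) p"
  unfolding cond_entropy_bit_def
  by (rule average_over_code) (use assms in \<open>simp_all add: binary_entropy_posterior\<close>)

lemma bitMAP_erasure_eq_erasure_avg:
  "bitMAP_erasure N C i p =
    erasure_avg {..<N} (\<lambda>E. if bit_undetermined C i ({..<N} - E) then 1 else 0) p"
  unfolding bitMAP_erasure_def
  by (rule average_over_code) (simp_all only: card_lessThan consistent_differ_iff_bit_undetermined)

text \<open>Bit i is erased with probability p, and an erased bit is recovered exactly when the
  other observations determine it.\<close>
lemma bitMAP_erasure_eq: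
  assumes "i < N"
  shows "bitMAP_erasure N C i p = p * cond_entropy_bit N C i p"
proof -
  let ?M = "{..<N} - {i}"
  let ?u = "\<lambda>S. if bit_undetermined C i S then 1 else (0::real)"
  have "bitMAP_erasure N C i p = erasure_avg (insert i ?M) (\<lambda>E. ?u ({..<N} - E)) p"
    using assms by (simp add: bitMAP_erasure_eq_erasure_avg insert_absorb)
  also have "\<dots> = p * erasure_avg ?M (\<lambda>E. ?u ({..<N} - insert i E)) p
      + (1 - p) * erasure_avg ?M (\<lambda>E. ?u ({..<N} - E)) p"
    by (rule erasure_avg_insert) simp_all
  also have "erasure_avg ?M (\<lambda>E. ?u ({..<N} - E)) p = erasure_avg ?M (\<lambda>_. 0) p"
    using assms by (intro erasure_avg_cong)
      (auto simp: bit_undetermined_def vanishing_codewords_def)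
  also have "erasure_avg ?M (\<lambda>E. ?u ({..<N} - insert i E)) p = cond_entropy_bit N C i p"
    unfolding cond_entropy_bit_eq_erasure_avg[OF assms]
    by (intro erasure_avg_cong arg_cong[where f = ?u]) blast
  finally show ?thesis by (simp add: erasure_avg_def)
qed

lemma avg_bitMAP_erasure_eq: "avg_bitMAP_erasure N C p = p * avg_EXIT N C p"
  unfolding avg_bitMAP_erasure_def avg_EXIT_def
  by (simp add: bitMAP_erasure_eq sum_distrib_left)

lemma log_card_vanishing_codewords_diff:
  "log 2 (real (card (vanishing_codewords C S))) - log 2 (real (card (vanishing_codewords C (insert j S))))
     = (if bit_undetermined C j S then 1 else 0)"
proof (cases "bit_undetermined C j S")
  case True
  then obtain d where d: "d \<in> vanishing_codewords C S" "d j"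
    unfolding bit_undetermined_def by blast
  have "card (vanishing_codewords C S) = 2 * card (vanishing_codewords C (insert j S))"
    unfolding vanishing_codewords_insert using d finite_vanishing_codewords
    by (intro card_eq_twice_card_bit_clear[where d = d]) (auto intro: word_add_vanishing_codewords)
  then show ?thesis
    using True card_vanishing_codewords_pos[of "insert j S"] by (simp add: log_mult)
next
  case False
  then have "vanishing_codewords C (insert j S) = vanishing_codewords C S"
    unfolding vanishing_codewords_insert bit_undetermined_def by blast
  then show ?thesis using False by simp
qed

lemma normalized_cond_entropy_has_real_derivative:
  "(normalized_cond_entropy N C has_real_derivative avg_EXIT N C p) (at p)"
proof -
  let ?f = "\<lambda>E. log 2 (real (card (vanishing_codewords C ({..<N} - E))))"
  have "erasure_avg ({..<N} - {j}) (\<lambda>E. ?f (insert j E) - ?f E) p = cond_entropy_bit N C j p"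
    if "j < N" for j
  proof -
    have "?f (insert j E) - ?f E = (if bit_undetermined C j ({..<N} - {j} - E) then 1 else 0)"
      if "E \<subseteq> {..<N} - {j}" for E
    proof -
      have "{..<N} - insert j E = {..<N} - {j} - E" "{..<N} - E = insert j ({..<N} - {j} - E)"
        using that \<open>j < N\<close> by auto
      then show ?thesis
        by (simp only: log_card_vanishing_codewords_diff)
    qed
    then show ?thesis
      using cond_entropy_bit_eq_erasure_avg[OF \<open>j < N\<close>] by (simp cong: erasure_avg_cong)
  qed
  then have "(erasure_avg {..<N} ?f has_real_derivative (\<Sum>j<N. cond_entropy_bit N C j p)) (at p)"
    using erasure_avg_has_real_derivative[of "{..<N}" ?f p] by simp
  from DERIV_cdivide[OF this, of "real N"] show ?thesis
    unfolding normalized_cond_entropy_def avg_EXIT_def by simp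
qed

lemma normalized_cond_entropy_at_0: "normalized_cond_entropy N C 0 = 0"
  by (simp add: normalized_cond_entropy_def erasure_avg_at_0 vanishing_codewords_all)

lemma normalized_cond_entropy_at_1: "normalized_cond_entropy N C 1 = code_rate N C"
  by (simp add: normalized_cond_entropy_def erasure_avg_at_1 code_rate_def vanishing_codewords_def)

text \<open>Observing fewer bits can only leave a bit undetermined more often.\<close>
lemma avg_EXIT_mono: "mono_on {0..1} (avg_EXIT N C)"
proof (rule mono_onI)
  fix x y :: real assume "x \<in> {0..1}" "y \<in> {0..1}" "x \<le> y"
  then have "cond_entropy_bit N C i x \<le> cond_entropy_bit N C i y" if "i < N" for i
    unfolding cond_entropy_bit_eq_erasure_avg[OF that]
    by (intro erasure_avg_mono) (auto elim!: bit_undetermined_antimono)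
  then show "avg_EXIT N C x \<le> avg_EXIT N C y"
    unfolding avg_EXIT_def by (intro divide_right_mono sum_mono) auto
qed

lemma bit_determined_by_other_bits:
  assumes "min_dist_ge2 C"
  shows "\<not> bit_undetermined C i ({..<N} - {i})"
proof
  assume "bit_undetermined C i ({..<N} - {i})"
  then obtain c where c: "c \<in> C" "c i" "\<forall>j<N. j \<noteq> i \<longrightarrow> \<not> c j"
    unfolding bit_undetermined_def vanishing_codewords_def by blast
  then have "{j. c j} = {i}"
    using codeword_vanishes_beyond[OF c(1)] by (auto, meson not_le)
  then have "weight (word_add c zero_word) = 1"
    by (simp add: weight_def zero_word_def word_add_def)
  moreover have "c \<noteq> zero_word"
    using c(2) by (auto simp: zero_word_def)
  ultimately show False
    using assms c(1) zero_word_in_code unfolding min_dist_ge2_def by fastforce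
qed

lemma avg_EXIT_at_0:
  assumes "min_dist_ge2 C"
  shows "avg_EXIT N C 0 = 0"
proof -
  have "cond_entropy_bit N C i 0 = 0" if "i < N" for i
    using bit_determined_by_other_bits[OF assms]
    by (simp add: cond_entropy_bit_eq_erasure_avg[OF that] erasure_avg_at_0)
  then show ?thesis by (simp add: avg_EXIT_def)
qed

lemma avg_EXIT_at_1:
  assumes "proper_code N C" "N > 0"
  shows "avg_EXIT N C 1 = 1"
proof -
  have "cond_entropy_bit N C i 1 = 1" if "i < N" for i
    using assms that
    by (auto simp: cond_entropy_bit_eq_erasure_avg[OF that] erasure_avg_at_1
        proper_code_def bit_undetermined_def vanishing_codewords_def)
  then show ?thesis using assms(2) by (simp add: avg_EXIT_def)
qed

end

section \<open>Sequences of EXIT curves\<close>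

definition level_quantile :: "(real \<Rightarrow> real) \<Rightarrow> real \<Rightarrow> real" where
  "level_quantile f t = Inf {p\<in>{0..1}. t \<le> f p}"

lemma level_quantile_set_nonempty:
  fixes f :: "real \<Rightarrow> real"
  assumes "t \<le> f 1" shows "{p\<in>{0..1}. t \<le> f p} \<noteq> {}"
proof -
  have "1 \<in> {p\<in>{0..1}. t \<le> f p}" using assms by simp
  then show ?thesis by blast
qed

lemma level_quantile_set_bdd_below: "bdd_below {p\<in>{0..1::real}. t \<le> f p}"
  by (rule bdd_belowI[of _ 0]) simp

lemma level_quantile_le: "p \<in> {0..1} \<Longrightarrow> t \<le> f p \<Longrightarrow> level_quantile f t \<le> p"
  unfolding level_quantile_def by (rule cInf_lower[OF _ level_quantile_set_bdd_below]) simp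

lemma level_quantile_nonneg: "t \<le> f 1 \<Longrightarrow> 0 \<le> level_quantile f t"
  unfolding level_quantile_def by (rule cInf_greatest) auto

lemma le_at_above_level_quantile:
  assumes "mono_on {0..1} f" "t \<le> f 1" "level_quantile f t < p" "p \<le> 1"
  shows "t \<le> f p"
proof -
  obtain q where "q \<in> {0..1}" "t \<le> f q" "q < p"
    using assms(3) cInf_less_iff[OF level_quantile_set_nonempty[of t f, OF assms(2)] level_quantile_set_bdd_below]
    unfolding level_quantile_def by blast
  then show ?thesis
    using assms(4) mono_onD[OF assms(1), of q p] by auto
qed

lemma level_quantile_mono:
  "t \<le> t' \<Longrightarrow> t' \<le> f 1 \<Longrightarrow> level_quantile f t \<le> level_quantile f t'"
  unfolding level_quantile_def
  by (rule cInf_superset_mono[OF level_quantile_set_nonempty level_quantile_set_bdd_below]) auto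

lemma exists_close_below:
  fixes a s p :: real
  assumes "a < 1" "0 < s" "s < p"
  shows "\<exists>q. 0 \<le> q \<and> q < s \<and> a * (p - q) < p - s"
proof -
  define \<delta> where "\<delta> = min s ((1 - a) * (p - s) / 2)"
  have \<delta>: "0 < \<delta>" "\<delta> \<le> s" "\<delta> \<le> (1 - a) * (p - s) / 2"
    using assms by (auto simp: \<delta>_def min_def)
  have pos: "0 < (1 - a) * (p - s)"
    using assms by simp
  have "a * \<delta> < (1 - a) * (p - s)"
  proof (cases "a \<le> 0")
    case True
    then have "a * \<delta> \<le> 0" using \<delta> by (simp add: mult_nonpos_nonneg)
    then show ?thesis using pos by linarith
  next
    case False
    then have "a * \<delta> \<le> \<delta>" using \<delta> assms by (simp add: mult_left_le_one_le)
    then show ?thesis using \<delta> pos by linarith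
  qed
  then have "a * (p - (s - \<delta>)) < p - s"
    by (simp add: algebra_simps)
  then show ?thesis
    using \<delta> by (intro exI[of _ "s - \<delta>"]) auto
qed

text \<open>h n stands for the average EXIT function of the n-th code, G n for its normalized
  conditional entropy and R n for its rate.\<close>
locale exit_curves =
  fixes h G :: "nat \<Rightarrow> real \<Rightarrow> real" and R :: "nat \<Rightarrow> real" and r :: real
  assumes primitive: "\<And>n x. (G n has_real_derivative h n x) (at x)"
    and mono: "\<And>n. mono_on {0..1} (h n)"
    and at_0: "\<And>n. h n 0 = 0" and at_1: "\<And>n. h n 1 = 1"
    and primitive_at_0: "\<And>n. G n 0 = 0" and primitive_at_1: "\<And>n. G n 1 = R n"
    and R_tendsto: "R \<longlonglongrightarrow> r" and r: "0 < r" "r < 1"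
begin

lemma bounds: "p \<in> {0..1} \<Longrightarrow> 0 \<le> h n p \<and> h n p \<le> 1"
  using mono_onD[OF mono, of 0 p n] mono_onD[OF mono, of p 1 n] by (simp add: at_0 at_1)

lemma increment_bounds:
  assumes "0 \<le> a" "a \<le> b" "b \<le> 1"
  shows "h n a * (b - a) \<le> G n b - G n a \<and> G n b - G n a \<le> h n b * (b - a)"
proof (cases "a = b")
  case False
  then obtain z where z: "a < z" "z < b" "G n b - G n a = (b - a) * h n z"
    using MVT2[OF _ primitive] assms by (metis order_less_le)
  then have "h n a \<le> h n z" "h n z \<le> h n b"
    using assms by (auto intro!: mono_onD[OF mono])
  then show ?thesis
    using z by (simp add: mult.commute mult_right_mono)
qed simp

lemma rate_le:
  assumes "0 \<le> q" "q \<le> p" "p \<le> 1"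
  shows "R n \<le> h n q + h n p * (p - q) + (1 - p)"
proof -
  have "G n q \<le> h n q * q" "G n p - G n q \<le> h n p * (p - q)" "R n - G n p \<le> 1 - p"
    using increment_bounds[of 0 q n] increment_bounds[of q p n] increment_bounds[of p 1 n] assms
    by (simp_all add: primitive_at_0 primitive_at_1 at_1)
  moreover have "h n q * q \<le> h n q"
    using bounds[of q n] assms by (simp add: mult_left_le)
  ultimately show ?thesis by linarith
qed

lemma quantile_rate_bound:
  assumes "0 \<le> t" "t \<le> 1"
  shows "t * (1 - level_quantile (h n) t) \<le> R n"
proof -
  define b where "b = level_quantile (h n) t"
  have b: "0 \<le> b" "b \<le> 1"
    using assms level_quantile_nonneg[of t "h n"] level_quantile_le[of 1 t "h n"]
    by (simp_all add: b_def at_1)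
  have "0 \<le> G n b"
    using increment_bounds[of 0 b n] b by (simp add: at_0 primitive_at_0)
  moreover have "t * (1 - b) \<le> G n 1 - G n b"
  proof (cases "b = 1")
    case False
    then obtain z where z: "b < z" "z < 1" "G n 1 - G n b = (1 - b) * h n z"
      using MVT2[OF _ primitive] b by (metis order_less_le)
    then have "t \<le> h n z"
      using le_at_above_level_quantile[OF mono] assms unfolding b_def by (simp add: at_1)
    then show ?thesis
      using z by (simp add: mult.commute mult_right_mono)
  qed simp
  ultimately show ?thesis
    unfolding b_def primitive_at_1 by linarith
qed

lemma scaled_tendsto_0_iff: "0 \<le> p \<Longrightarrow> (\<lambda>n. p * h n p) \<longlonglongrightarrow> 0 \<longleftrightarrow> (\<lambda>n. h n p) \<longlonglongrightarrow> 0"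
  using tendsto_mult_left_iff[of p "\<lambda>n. h n p" 0 sequentially] by (cases "p = 0") (simp_all add: at_0)

lemma tendsto_1_above_threshold:
  assumes below: "\<And>q. 0 \<le> q \<Longrightarrow> q < 1 - r \<Longrightarrow> (\<lambda>n. h n q) \<longlonglongrightarrow> 0"
    and p: "1 - r < p" "p \<le> 1"
  shows "(\<lambda>n. h n p) \<longlonglongrightarrow> 1"
proof (rule order_tendstoI)
  fix a :: real assume "1 < a"
  then have "h n p < a" for n
    using bounds[of p n] p r by auto
  then show "eventually (\<lambda>n. h n p < a) sequentially"
    by simp
next
  fix a :: real assume "a < 1"
  obtain q where q: "0 \<le> q" "q < 1 - r" "a * (p - q) < p - (1 - r)"
    using exists_close_below[of a "1 - r" p] \<open>a < 1\<close> p r by auto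
  then have "a < (r - 0 - (1 - p)) / (p - q)"
    using q p by (simp add: field_simps)
  moreover have "(\<lambda>n. (R n - h n q - (1 - p)) / (p - q)) \<longlonglongrightarrow> (r - 0 - (1 - p)) / (p - q)"
    using q p by (intro tendsto_intros R_tendsto below) auto
  ultimately have "eventually (\<lambda>n. a < (R n - h n q - (1 - p)) / (p - q)) sequentially"
    by (rule order_tendstoD(1)[rotated])
  then show "eventually (\<lambda>n. a < h n p) sequentially"
  proof (rule eventually_mono)
    fix n assume "a < (R n - h n q - (1 - p)) / (p - q)"
    moreover have "R n - h n q - (1 - p) \<le> h n p * (p - q)"
      using rate_le[of q p n] q p by linarith
    then have "(R n - h n q - (1 - p)) / (p - q) \<le> h n p"
      using q p by (simp add: pos_divide_le_eq)
    ultimately show "a < h n p"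
      by linarith
  qed
qed

lemma quantile_gap_tendsto_0:
  assumes below: "\<And>q. 0 \<le> q \<Longrightarrow> q < 1 - r \<Longrightarrow> (\<lambda>n. h n q) \<longlonglongrightarrow> 0"
    and above: "\<And>q. 1 - r < q \<Longrightarrow> q \<le> 1 \<Longrightarrow> (\<lambda>n. h n q) \<longlonglongrightarrow> 1"
    and \<epsilon>: "0 < \<epsilon>" "\<epsilon> \<le> 1/2"
  shows "(\<lambda>n. level_quantile (h n) (1 - \<epsilon>) - level_quantile (h n) \<epsilon>) \<longlonglongrightarrow> 0"
proof (rule order_tendstoI)
  fix a :: real assume "a < 0"
  have "level_quantile (h n) \<epsilon> \<le> level_quantile (h n) (1 - \<epsilon>)" for n
    using \<epsilon> by (intro level_quantile_mono) (simp_all add: at_1)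
  then have "a < level_quantile (h n) (1 - \<epsilon>) - level_quantile (h n) \<epsilon>" for n
    using \<open>a < 0\<close> by (smt (verit))
  then show "eventually (\<lambda>n. a < level_quantile (h n) (1 - \<epsilon>) - level_quantile (h n) \<epsilon>) sequentially"
    by simp
next
  fix a :: real assume "0 < a"
  define \<delta> where "\<delta> = min (a / 3) (min r (1 - r))"
  have \<delta>: "0 < \<delta>" "\<delta> < a / 2" "\<delta> \<le> r" "\<delta> \<le> 1 - r"
    using \<open>0 < a\<close> r by (auto simp: \<delta>_def min_def)
  have "eventually (\<lambda>n. 1 - \<epsilon> < h n (1 - r + \<delta>)) sequentially"
    using \<epsilon> \<delta> by (intro order_tendstoD(1)[OF above]) auto
  moreover have "eventually (\<lambda>n. h n (1 - r - \<delta>) < \<epsilon>) sequentially"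
    using \<epsilon> \<delta> by (intro order_tendstoD(2)[OF below]) auto
  ultimately show "eventually (\<lambda>n. level_quantile (h n) (1 - \<epsilon>) - level_quantile (h n) \<epsilon> < a) sequentially"
  proof eventually_elim
    case (elim n)
    have "level_quantile (h n) (1 - \<epsilon>) \<le> 1 - r + \<delta>"
      using elim(1) \<delta> by (intro level_quantile_le) auto
    moreover have "1 - r - \<delta> \<le> level_quantile (h n) \<epsilon>"
      using elim(2) \<epsilon> \<delta> le_at_above_level_quantile[OF mono, of \<epsilon> n "1 - r - \<delta>"]
      by (force simp: at_1)
    ultimately show ?case using \<delta> by linarith
  qed
qed

lemma tendsto_0_below_threshold:
  assumes gap: "\<And>\<epsilon>. 0 < \<epsilon> \<Longrightarrow> \<epsilon> \<le> 1/2 \<Longrightarrow>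
      (\<lambda>n. level_quantile (h n) (1 - \<epsilon>) - level_quantile (h n) \<epsilon>) \<longlonglongrightarrow> 0"
    and p: "0 \<le> p" "p < 1 - r"
  shows "(\<lambda>n. h n p) \<longlonglongrightarrow> 0"
proof (rule order_tendstoI)
  fix a :: real assume "a < 0"
  then have "a < h n p" for n
    using bounds[of p n] p r by auto
  then show "eventually (\<lambda>n. a < h n p) sequentially"
    by simp
next
  fix a :: real assume "0 < a"
  define \<rho> where "\<rho> = r / (1 - p)"
  define \<epsilon> where "\<epsilon> = min (1/2) (min a ((1 - \<rho>) / 2))"
  have "\<rho> < 1"
    using p r by (simp add: \<rho>_def)
  then have \<epsilon>: "0 < \<epsilon>" "\<epsilon> \<le> 1/2" "\<epsilon> \<le> a" "\<rho> < 1 - \<epsilon>"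
    using \<open>0 < a\<close> by (auto simp: \<epsilon>_def min_def field_simps)
  then have "r < (1 - \<epsilon>) * (1 - p)"
    using p r by (simp add: \<rho>_def divide_less_eq)
  then have "r / (1 - \<epsilon>) < 1 - p"
    using \<epsilon> by (simp add: divide_less_eq mult.commute)
  then have "p < 1 - r / (1 - \<epsilon>) - 0"
    by simp
  moreover have "(\<lambda>n. 1 - R n / (1 - \<epsilon>)
      - (level_quantile (h n) (1 - \<epsilon>) - level_quantile (h n) \<epsilon>)) \<longlonglongrightarrow> 1 - r / (1 - \<epsilon>) - 0"
    using \<epsilon> by (intro tendsto_intros R_tendsto gap) auto
  ultimately have "eventually (\<lambda>n. p < 1 - R n / (1 - \<epsilon>)
      - (level_quantile (h n) (1 - \<epsilon>) - level_quantile (h n) \<epsilon>)) sequentially"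
    by (rule order_tendstoD(1)[rotated])
  then show "eventually (\<lambda>n. h n p < a) sequentially"
  proof (rule eventually_mono)
    fix n
    assume n: "p < 1 - R n / (1 - \<epsilon>) - (level_quantile (h n) (1 - \<epsilon>) - level_quantile (h n) \<epsilon>)"
    have "(1 - \<epsilon>) * (1 - level_quantile (h n) (1 - \<epsilon>)) \<le> R n"
      using \<epsilon> by (intro quantile_rate_bound) auto
    then have "1 - level_quantile (h n) (1 - \<epsilon>) \<le> R n / (1 - \<epsilon>)"
      using \<epsilon> by (simp add: le_divide_eq mult.commute)
    then have "p < level_quantile (h n) \<epsilon>"
      using n by linarith
    then have "h n p < \<epsilon>"
      using level_quantile_le[of p \<epsilon> "h n"] p r by force
    then show "h n p < a" using \<epsilon> by simp
  qed
qed

end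

theorem proposition6:
  fixes N :: "nat \<Rightarrow> nat" and C :: "nat \<Rightarrow> (nat \<Rightarrow> bool) set" and r :: real
  assumes codes: "\<And>n. binary_linear_code (N n) (C n) \<and> proper_code (N n) (C n)
                        \<and> min_dist_ge2 (C n) \<and> N n > 0"
    and r: "0 < r" "r < 1"
    and rate: "(\<lambda>n. code_rate (N n) (C n)) \<longlonglongrightarrow> r"
  shows "((\<forall>p. 0 \<le> p \<and> p < 1 - r \<longrightarrow> (\<lambda>n. avg_bitMAP_erasure (N n) (C n) p) \<longlonglongrightarrow> 0)
          \<longleftrightarrow>
          ((\<forall>p. 0 \<le> p \<and> p < 1 - r \<longrightarrow> (\<lambda>n. avg_EXIT (N n) (C n) p) \<longlonglongrightarrow> 0) \<and>
           (\<forall>p. 1 - r < p \<and> p \<le> 1 \<longrightarrow> (\<lambda>n. avg_EXIT (N n) (C n) p) \<longlonglongrightarrow> 1)))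
       \<and>
         ((\<forall>p. 0 \<le> p \<and> p < 1 - r \<longrightarrow> (\<lambda>n. avg_bitMAP_erasure (N n) (C n) p) \<longlonglongrightarrow> 0)
          \<longleftrightarrow>
          (\<forall>\<epsilon>. 0 < \<epsilon> \<and> \<epsilon> \<le> 1/2 \<longrightarrow>
             (\<lambda>n. exit_quantile (N n) (C n) (1 - \<epsilon>) - exit_quantile (N n) (C n) \<epsilon>) \<longlonglongrightarrow> 0))"
proof -
  have code: "binary_linear_code (N n) (C n)" "proper_code (N n) (C n)" "min_dist_ge2 (C n)" "N n > 0"
    for n using codes by auto
  interpret exit_curves "\<lambda>n. avg_EXIT (N n) (C n)" "\<lambda>n. normalized_cond_entropy (N n) (C n)"
    "\<lambda>n. code_rate (N n) (C n)" r
    using code r rate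
    by unfold_locales (simp_all add: normalized_cond_entropy_has_real_derivative avg_EXIT_mono
        avg_EXIT_at_0 avg_EXIT_at_1 normalized_cond_entropy_at_0 normalized_cond_entropy_at_1)
  have "avg_bitMAP_erasure (N n) (C n) p = p * avg_EXIT (N n) (C n) p" for n p
    by (rule avg_bitMAP_erasure_eq[OF code(1)])
  moreover have "exit_quantile (N n) (C n) t = level_quantile (avg_EXIT (N n) (C n)) t" for n t
    by (simp add: exit_quantile_def level_quantile_def)
  ultimately show ?thesis
    using scaled_tendsto_0_iff tendsto_1_above_threshold quantile_gap_tendsto_0 tendsto_0_below_threshold
    by (simp only:) blast
qed

end
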